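(* Let $G=\mathrm{srg}(n,k,\lambda,\mu)$ be a strongly regular graph with $\mu\ge1$. Then \[ \mathrm{QEC}(G)=-2-\frac{\lambda-\mu-\sqrt{(\lambda-\mu)^2+4(k-\mu)}}{2}. \]
   Context: A graph $G=(V,E)$ is finite and simple. It is strongly regular with parameters $\mathrm{srg}(n,k,\lambda,\mu)$ if $|V|=n$, every vertex has exactly $k$ neighbours, every two adjacent vertices have exactly $\lambda$ common neighbours, and every two distinct non-adjacent vertices have exactly $\mu$ common neighbours. The hypothesis $\mu\ge1$ means in particular that there exist distinct non-adjacent vertices (so $G$ is not complete) and that $G$ is connected. For a connected graph $G=(V,E)$ with $|V|\ge2$, let $D=[d(x,y)]_{x,y\in V}$ be its distance matrix ($d$ the graph distance), and define the quadratic embedding constant \[ \mathrm{QEC}(G)=\max\{\langle f,Df\rangle : f\in\mathbb{R}^V,\ \langle f,f\rangle=1,\ \langle \mathbf{1},f\rangle=0\}, \] where $\mathbf 1$ is the all-ones vector and $\langle\cdot,\cdot\rangle$ the standard inner product. *)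

theory Defs
  imports "HOL-Analysis.Analysis"
begin

definition simple_graph :: "'a set \<Rightarrow> ('a \<Rightarrow> 'a \<Rightarrow> bool) \<Rightarrow> bool" where
  "simple_graph V E \<longleftrightarrow> finite V \<and> (\<forall>x y. E x y \<longrightarrow> x \<in> V \<and> y \<in> V)
     \<and> (\<forall>x y. E x y \<longrightarrow> E y x) \<and> (\<forall>x. \<not> E x x)"

definition nbrs :: "'a set \<Rightarrow> ('a \<Rightarrow> 'a \<Rightarrow> bool) \<Rightarrow> 'a \<Rightarrow> 'a set" where
  "nbrs V E x = {y \<in> V. E x y}"

definition strongly_regular ::
  "'a set \<Rightarrow> ('a \<Rightarrow> 'a \<Rightarrow> bool) \<Rightarrow> nat \<Rightarrow> nat \<Rightarrow> nat \<Rightarrow> nat \<Rightarrow> bool" where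
  "strongly_regular V E n k lam mu \<longleftrightarrow> simple_graph V E \<and> card V = n
     \<and> (\<forall>x\<in>V. card (nbrs V E x) = k)
     \<and> (\<forall>x\<in>V. \<forall>y\<in>V. E x y \<longrightarrow> card (nbrs V E x \<inter> nbrs V E y) = lam)
     \<and> (\<forall>x\<in>V. \<forall>y\<in>V. x \<noteq> y \<longrightarrow> \<not> E x y \<longrightarrow> card (nbrs V E x \<inter> nbrs V E y) = mu)"

definition walk_of_length :: "'a set \<Rightarrow> ('a \<Rightarrow> 'a \<Rightarrow> bool) \<Rightarrow> 'a \<Rightarrow> 'a \<Rightarrow> nat \<Rightarrow> bool" where
  "walk_of_length V E x y m \<longleftrightarrow> (\<exists>p :: nat \<Rightarrow> 'a. p 0 = x \<and> p m = y
     \<and> (\<forall>i\<le>m. p i \<in> V) \<and> (\<forall>i<m. E (p i) (p (Suc i))))"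

text \<open>Graph distance (meaningful for connected graphs).\<close>
definition graph_dist :: "'a set \<Rightarrow> ('a \<Rightarrow> 'a \<Rightarrow> bool) \<Rightarrow> 'a \<Rightarrow> 'a \<Rightarrow> nat" where
  "graph_dist V E x y = (LEAST m. walk_of_length V E x y m)"

text \<open>Quadratic embedding constant: the maximum of <f, D f> over
  f : V \<rightarrow> R with <f,f> = 1 and <1,f> = 0 (rendered as a Sup; the maximum is attained).\<close>
definition QEC :: "'a set \<Rightarrow> ('a \<Rightarrow> 'a \<Rightarrow> bool) \<Rightarrow> real" where
  "QEC V E = Sup {(\<Sum>x\<in>V. \<Sum>y\<in>V. real (graph_dist V E x y) * f x * f y) | f :: 'a \<Rightarrow> real.
      (\<Sum>x\<in>V. (f x)\<^sup>2) = 1 \<and> (\<Sum>x\<in>V. f x) = 0}"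

end

theory Submission
  imports Defs
begin

(* An srg with mu >= 1 has diameter two, so its distance matrix is D = 2(J - I) - A and
   <f, D f> = -2 <f, f> - <f, A f> for f orthogonal to the all-ones vector. On that subspace
   A^2 = (k - mu) I + (lam - mu) A, so the Rayleigh quotient of A is bounded below by the smaller
   root s of t^2 = (lam - mu) t + (k - mu). The bound is attained because A is not a scalar on
   that subspace: for suitable v, (A - r) v with r the larger root is an eigenvector for s. *)

definition mat_vec :: "'a set \<Rightarrow> ('a \<Rightarrow> 'a \<Rightarrow> real) \<Rightarrow> ('a \<Rightarrow> real) \<Rightarrow> 'a \<Rightarrow> real" where
  "mat_vec V W f x = (\<Sum>y\<in>V. W x y * f y)"

definition inner_on :: "'a set \<Rightarrow> ('a \<Rightarrow> real) \<Rightarrow> ('a \<Rightarrow> real) \<Rightarrow> real" where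
  "inner_on V f g = (\<Sum>x\<in>V. f x * g x)"

definition adj_matrix :: "('a \<Rightarrow> 'a \<Rightarrow> bool) \<Rightarrow> 'a \<Rightarrow> 'a \<Rightarrow> real" where
  "adj_matrix E x y = (if E x y then 1 else 0)"

lemma mat_vec_diff: "mat_vec V W (\<lambda>x. f x - c * g x) y = mat_vec V W f y - c * mat_vec V W g y"
  unfolding mat_vec_def by (simp add: sum_subtractf sum_distrib_left algebra_simps)

lemma mat_vec_scale: "mat_vec V W (\<lambda>x. c * f x) y = c * mat_vec V W f y"
  unfolding mat_vec_def by (simp add: sum_distrib_left mult_ac)

lemma inner_on_diff_right: "inner_on V f (\<lambda>x. g x - c * h x) = inner_on V f g - c * inner_on V f h"
  unfolding inner_on_def by (simp add: sum_subtractf sum_distrib_left algebra_simps)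

lemma inner_on_scale_right: "inner_on V f (\<lambda>x. c * g x) = c * inner_on V f g"
  unfolding inner_on_def by (simp add: sum_distrib_left mult_ac)

lemma inner_on_cong: "(\<And>x. x \<in> V \<Longrightarrow> g x = h x) \<Longrightarrow> inner_on V f g = inner_on V f h"
  unfolding inner_on_def by (auto intro: sum.cong)

lemma inner_on_self_nonneg: "0 \<le> inner_on V f f"
  unfolding inner_on_def by (intro sum_nonneg) auto

lemma inner_on_self_eq_0D:
  assumes "finite V" "inner_on V f f = 0" "x \<in> V"
  shows "f x = 0"
  using assms sum_nonneg_eq_0_iff[of V "\<lambda>x. f x * f x"] unfolding inner_on_def by auto

lemma inner_on_mat_vec_sym:
  assumes "\<And>x y. W x y = W y x"
  shows "inner_on V (mat_vec V W f) g = inner_on V f (mat_vec V W g)"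
proof -
  have "inner_on V (mat_vec V W f) g = (\<Sum>x\<in>V. \<Sum>y\<in>V. W x y * f y * g x)"
    unfolding inner_on_def mat_vec_def by (simp add: sum_distrib_right)
  also have "\<dots> = (\<Sum>y\<in>V. \<Sum>x\<in>V. W y x * f y * g x)"
    by (subst sum.swap) (simp add: assms)
  also have "\<dots> = inner_on V f (mat_vec V W g)"
    unfolding inner_on_def mat_vec_def by (simp add: sum_distrib_left mult_ac)
  finally show ?thesis .
qed

(* With g = (A - s) f one gets (A - s) g = (d - 2 s) g, hence <g, g> = (d - 2 s) <f, g>,
   which forces <f, g> = <f, A f> - s <f, f> to be nonnegative. *)
lemma inner_on_mat_vec_ge_smaller_root:
  assumes "finite V" and sym: "\<And>x y. W x y = W y x"
    and square: "\<And>x. x \<in> V \<Longrightarrow> mat_vec V W (mat_vec V W f) x = c * f x + d * mat_vec V W f x"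
    and root: "s * s = d * s + c" and smaller: "2 * s \<le> d"
  shows "s * inner_on V f f \<le> inner_on V f (mat_vec V W f)"
proof -
  define g where "g x = mat_vec V W f x - s * f x" for x
  have shifted: "mat_vec V W g x - s * g x = (d - 2 * s) * g x" if "x \<in> V" for x
  proof -
    have "s * s * f x = (d * s + c) * f x" using root by simp
    then show ?thesis using square[OF that] unfolding g_def mat_vec_diff by (simp add: algebra_simps)
  qed
  have "inner_on V g g = inner_on V (mat_vec V W f) g - s * inner_on V f g"
    unfolding inner_on_def sum_distrib_left sum_subtractf[symmetric]
    by (rule sum.cong) (auto simp: g_def left_diff_distrib right_diff_distrib)
  also have "\<dots> = inner_on V f (\<lambda>x. mat_vec V W g x - s * g x)"
    by (simp add: inner_on_mat_vec_sym[OF sym] inner_on_diff_right)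
  also have "\<dots> = (d - 2 * s) * inner_on V f g"
    by (simp add: inner_on_cong[OF shifted] inner_on_scale_right)
  finally have gg: "inner_on V g g = (d - 2 * s) * inner_on V f g" .
  have "0 \<le> inner_on V f g"
  proof (cases "2 * s = d")
    case True
    then have "g x = 0" if "x \<in> V" for x
      using gg inner_on_self_eq_0D[OF \<open>finite V\<close> _ that] by simp
    then show ?thesis unfolding inner_on_def by (simp add: sum.neutral)
  next
    case False
    then show ?thesis using gg inner_on_self_nonneg[of V g] smaller
      by (simp add: zero_le_mult_iff)
  qed
  then show ?thesis unfolding g_def by (simp add: inner_on_diff_right)
qed

lemma mat_vec_eigenvector_from_square:
  assumes "mat_vec V W (mat_vec V W v) x = c * v x + d * mat_vec V W v x"
    and "s * s = d * s + c"
  shows "mat_vec V W (\<lambda>y. mat_vec V W v y - (d - s) * v y) x = s * (mat_vec V W v x - (d - s) * v x)"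
proof -
  have "s * s * v x = (d * s + c) * v x" using assms(2) by simp
  then show ?thesis unfolding mat_vec_diff assms(1) by (simp add: algebra_simps)
qed

lemma normalized_eigenvector:
  assumes "finite V" "x \<in> V" "g x \<noteq> 0"
    and eigen: "\<And>y. y \<in> V \<Longrightarrow> mat_vec V W g y = s * g y" and sum0: "(\<Sum>y\<in>V. g y) = 0"
  shows "\<exists>f. inner_on V f f = 1 \<and> (\<Sum>y\<in>V. f y) = 0 \<and> inner_on V f (mat_vec V W f) = s"
proof -
  have pos: "0 < inner_on V g g"
    unfolding inner_on_def using assms by (intro sum_pos2[of V x]) (auto simp: zero_less_mult_iff)
  define t where "t = 1 / sqrt (inner_on V g g)"
  define f where "f = (\<lambda>y. t * g y)"
  have "inner_on V f f = t\<^sup>2 * inner_on V g g"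
    unfolding inner_on_def f_def by (simp add: sum_distrib_left power2_eq_square mult_ac)
  then have unit: "inner_on V f f = 1"
    using pos unfolding t_def by (simp add: power_divide)
  have "inner_on V f (mat_vec V W f) = inner_on V f (\<lambda>y. s * f y)"
    by (intro inner_on_cong) (simp add: f_def mat_vec_scale eigen)
  then show ?thesis
    using unit sum0 by (intro exI[of _ f]) (simp add: inner_on_scale_right f_def flip: sum_distrib_left)
qed

lemma adj_matrix_sym: "simple_graph V E \<Longrightarrow> adj_matrix E x y = adj_matrix E y x"
  unfolding simple_graph_def adj_matrix_def by metis

lemma sum_indicator_card:
  "finite V \<Longrightarrow> (\<Sum>z\<in>V. if P z then 1 else 0 :: real) = real (card {z\<in>V. P z})"
  by (simp add: sum.If_cases Int_def)

lemma sum_adj_matrix_eq_degree: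
  assumes "simple_graph V E"
  shows "(\<Sum>y\<in>V. adj_matrix E x y) = real (card (nbrs V E x))"
  using assms unfolding adj_matrix_def nbrs_def simple_graph_def by (simp add: sum_indicator_card)

lemma sum_adj_matrix_mult_eq_common_nbrs:
  assumes "simple_graph V E"
  shows "(\<Sum>z\<in>V. adj_matrix E x z * adj_matrix E z y) = real (card (nbrs V E x \<inter> nbrs V E y))"
proof -
  have "(\<Sum>z\<in>V. adj_matrix E x z * adj_matrix E z y) = (\<Sum>z\<in>V. if E x z \<and> E y z then 1 else 0)"
    using assms by (intro sum.cong) (auto simp: adj_matrix_def simple_graph_def)
  also have "\<dots> = real (card {z\<in>V. E x z \<and> E y z})"
    using assms unfolding simple_graph_def by (simp add: sum_indicator_card)
  also have "{z\<in>V. E x z \<and> E y z} = nbrs V E x \<inter> nbrs V E y"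
    unfolding nbrs_def by auto
  finally show ?thesis .
qed

lemma sum_mat_vec_regular:
  assumes "simple_graph V E" and "\<And>x. x \<in> V \<Longrightarrow> card (nbrs V E x) = k"
  shows "(\<Sum>x\<in>V. mat_vec V (adj_matrix E) f x) = real k * (\<Sum>x\<in>V. f x)"
proof -
  have "(\<Sum>x\<in>V. mat_vec V (adj_matrix E) f x) = (\<Sum>y\<in>V. (\<Sum>x\<in>V. adj_matrix E y x) * f y)"
    unfolding mat_vec_def by (subst sum.swap) (simp add: sum_distrib_right adj_matrix_sym[OF assms(1)])
  also have "\<dots> = (\<Sum>y\<in>V. real k * f y)"
    using assms by (intro sum.cong) (simp_all add: sum_adj_matrix_eq_degree)
  finally show ?thesis by (simp add: sum_distrib_left)
qed

lemma walk_of_length_0_iff: "walk_of_length V E x y 0 \<longleftrightarrow> x = y \<and> x \<in> V"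
  unfolding walk_of_length_def by auto

lemma walk_of_length_1_iff: "walk_of_length V E x y 1 \<longleftrightarrow> E x y \<and> x \<in> V \<and> y \<in> V"
proof
  assume "E x y \<and> x \<in> V \<and> y \<in> V"
  then show "walk_of_length V E x y 1"
    unfolding walk_of_length_def by (intro exI[of _ "\<lambda>i. if i = 0 then x else y"]) auto
qed (auto simp: walk_of_length_def)

lemma walk_of_length_2I:
  assumes "E x z" "E z y" "x \<in> V" "y \<in> V" "z \<in> V"
  shows "walk_of_length V E x y 2"
  unfolding walk_of_length_def
proof (intro exI[of _ "\<lambda>i. if i = 0 then x else if i = 1 then z else y"] conjI allI impI)
  fix i :: nat
  assume "i < 2"
  then consider "i = 0" | "i = 1" by linarith
  then show "E ((\<lambda>i. if i = 0 then x else if i = 1 then z else y) i)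
      ((\<lambda>i. if i = 0 then x else if i = 1 then z else y) (Suc i))"
    by cases (use assms in auto)
qed (use assms in auto)

lemma graph_dist_eqI:
  assumes "walk_of_length V E x y m" and "\<And>j. j < m \<Longrightarrow> \<not> walk_of_length V E x y j"
  shows "graph_dist V E x y = m"
  unfolding graph_dist_def using assms by (intro Least_equality) (auto simp: not_less[symmetric])

lemma graph_dist_diameter_two:
  assumes "x \<in> V" "y \<in> V"
    and common: "x \<noteq> y \<Longrightarrow> \<not> E x y \<Longrightarrow> \<exists>z\<in>V. E x z \<and> E z y"
  shows "graph_dist V E x y = (if x = y then 0 else if E x y then 1 else 2)"
proof -
  consider "x = y" | "x \<noteq> y" "E x y" | "x \<noteq> y" "\<not> E x y" by blast
  then show ?thesis
  proof cases
    case 1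
    then show ?thesis using assms by (intro graph_dist_eqI) (auto simp: walk_of_length_0_iff)
  next
    case 2
    then show ?thesis using assms
      by (intro graph_dist_eqI) (auto simp: walk_of_length_0_iff walk_of_length_1_iff[simplified])
  next
    case 3
    then obtain z where "z \<in> V" "E x z" "E z y" using common by blast
    then have "walk_of_length V E x y 2" using assms by (intro walk_of_length_2I)
    moreover have "\<not> walk_of_length V E x y j" if "j < 2" for j
      using that 3 by (cases j) (auto simp: walk_of_length_0_iff walk_of_length_1_iff[simplified] less_Suc_eq)
    ultimately show ?thesis using 3 by (auto intro: graph_dist_eqI)
  qed
qed

lemma distance_form_diameter_two:
  assumes "simple_graph V E"
    and common: "\<And>x y. x \<in> V \<Longrightarrow> y \<in> V \<Longrightarrow> x \<noteq> y \<Longrightarrow> \<not> E x y \<Longrightarrow> \<exists>z\<in>V. E x z \<and> E z y"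
    and sum0: "(\<Sum>x\<in>V. f x) = 0"
  shows "(\<Sum>x\<in>V. \<Sum>y\<in>V. real (graph_dist V E x y) * f x * f y)
       = -2 * inner_on V f f - inner_on V f (mat_vec V (adj_matrix E) f)"
proof -
  have fin: "finite V" and irrefl: "\<And>x. \<not> E x x"
    using assms(1) unfolding simple_graph_def by auto
  have row: "(\<Sum>y\<in>V. real (graph_dist V E x y) * f x * f y)
      = -2 * (f x * f x) - f x * mat_vec V (adj_matrix E) f x" if x: "x \<in> V" for x
  proof -
    have "(\<Sum>y\<in>V. real (graph_dist V E x y) * f x * f y)
        = (\<Sum>y\<in>V. 2 * f x * f y - (if x = y then 2 * f x * f y else 0) - f x * (adj_matrix E x y * f y))"
      using x irrefl by (intro sum.cong) (auto simp: graph_dist_diameter_two common adj_matrix_def)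
    also have "\<dots> = 2 * f x * (\<Sum>y\<in>V. f y) - 2 * f x * f x - f x * mat_vec V (adj_matrix E) f x"
      using x fin by (simp add: sum_subtractf sum_distrib_left mat_vec_def)
    finally show ?thesis using sum0 by simp
  qed
  show ?thesis
    unfolding inner_on_def by (simp add: row sum_subtractf sum_distrib_left)
qed

lemma QEC_eqI:
  assumes upper: "\<And>f. inner_on V f f = 1 \<Longrightarrow> (\<Sum>x\<in>V. f x) = 0
      \<Longrightarrow> (\<Sum>x\<in>V. \<Sum>y\<in>V. real (graph_dist V E x y) * f x * f y) \<le> q"
    and attained: "inner_on V g g = 1" "(\<Sum>x\<in>V. g x) = 0"
      "(\<Sum>x\<in>V. \<Sum>y\<in>V. real (graph_dist V E x y) * g x * g y) = q"
  shows "QEC V E = q"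
  unfolding QEC_def
proof (rule cSup_eq_maximum)
  show "q \<in> {(\<Sum>x\<in>V. \<Sum>y\<in>V. real (graph_dist V E x y) * f x * f y) | f.
      (\<Sum>x\<in>V. (f x)\<^sup>2) = 1 \<and> (\<Sum>x\<in>V. f x) = 0}"
    using attained by (auto simp: inner_on_def power2_eq_square)
qed (use upper in \<open>auto simp: inner_on_def power2_eq_square\<close>)

locale strongly_regular_graph =
  fixes V :: "'a set" and E :: "'a \<Rightarrow> 'a \<Rightarrow> bool" and n k lam mu :: nat
  assumes srg: "strongly_regular V E n k lam mu"
begin

lemma simple: "simple_graph V E"
  using srg unfolding strongly_regular_def by blast

lemma finite_vertices: "finite V"
  using simple unfolding simple_graph_def by blast

lemma not_adj_self: "\<not> E x x"
  using simple unfolding simple_graph_def by blast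

lemma degree: "x \<in> V \<Longrightarrow> card (nbrs V E x) = k"
  using srg unfolding strongly_regular_def by blast

lemma common_nbrs_card:
  assumes "x \<in> V" "y \<in> V"
  shows "card (nbrs V E x \<inter> nbrs V E y)
    = (if x = y then k else if E x y then lam else mu)"
  using srg assms unfolding strongly_regular_def by (auto simp: degree)

lemma mu_le_k:
  assumes "x \<in> V" "y \<in> V" "x \<noteq> y" "\<not> E x y"
  shows "mu \<le> k"
proof -
  have "finite (nbrs V E x)"
    using finite_vertices unfolding nbrs_def by simp
  then have "card (nbrs V E x \<inter> nbrs V E y) \<le> card (nbrs V E x)"
    by (intro card_mono) auto
  then show ?thesis using assms common_nbrs_card[of x y] degree by simp
qed

lemma common_neighbour:
  assumes "mu \<ge> 1" "x \<in> V" "y \<in> V" "x \<noteq> y" "\<not> E x y"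
  shows "\<exists>z\<in>V. E x z \<and> E z y"
proof -
  have "nbrs V E x \<inter> nbrs V E y \<noteq> {}"
    using assms common_nbrs_card[of x y] by (intro notI) simp
  then show ?thesis using simple unfolding nbrs_def simple_graph_def by blast
qed

(* The entries of A^2 are the common-neighbour counts, so A^2 = k I + lam A + mu (J - I - A),
   and J vanishes on vectors of sum zero. *)
lemma mat_vec_adj_square:
  assumes "(\<Sum>y\<in>V. f y) = 0" "x \<in> V"
  shows "mat_vec V (adj_matrix E) (mat_vec V (adj_matrix E) f) x
    = (real k - real mu) * f x + (real lam - real mu) * mat_vec V (adj_matrix E) f x"
proof -
  have entry: "(\<Sum>z\<in>V. adj_matrix E x z * adj_matrix E z y)
      = real mu + (if x = y then real k - real mu else 0) + (real lam - real mu) * adj_matrix E x y"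
    if "y \<in> V" for y
    unfolding sum_adj_matrix_mult_eq_common_nbrs[OF simple] common_nbrs_card[OF assms(2) that]
    using not_adj_self by (simp add: adj_matrix_def)
  have "mat_vec V (adj_matrix E) (mat_vec V (adj_matrix E) f) x
      = (\<Sum>z\<in>V. \<Sum>y\<in>V. adj_matrix E x z * adj_matrix E z y * f y)"
    unfolding mat_vec_def by (simp add: sum_distrib_left mult.assoc)
  also have "\<dots> = (\<Sum>y\<in>V. (\<Sum>z\<in>V. adj_matrix E x z * adj_matrix E z y) * f y)"
    by (subst sum.swap) (simp add: sum_distrib_right)
  also have "\<dots> = (\<Sum>y\<in>V. real mu * f y + (if x = y then (real k - real mu) * f y else 0)
      + (real lam - real mu) * (adj_matrix E x y * f y))"
    by (intro sum.cong refl, subst entry) (auto simp: algebra_simps)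
  also have "\<dots> = real mu * (\<Sum>y\<in>V. f y) + (real k - real mu) * f x
      + (real lam - real mu) * mat_vec V (adj_matrix E) f x"
    using assms(2) finite_vertices by (simp add: sum.distrib sum_distrib_left mat_vec_def)
  finally show ?thesis using assms(1) by simp
qed

lemma adj_quadratic_form_ge_smaller_root:
  assumes "(\<Sum>y\<in>V. f y) = 0"
    and "s * s = (real lam - real mu) * s + (real k - real mu)" and "2 * s \<le> real lam - real mu"
  shows "s * inner_on V f f \<le> inner_on V f (mat_vec V (adj_matrix E) f)"
  using inner_on_mat_vec_ge_smaller_root[OF finite_vertices adj_matrix_sym[OF simple]
      mat_vec_adj_square[OF assms(1)] assms(2,3)] .

lemma adj_not_scalar_on_sum_zero:
  assumes "mu \<ge> 1" "x \<in> V" "y \<in> V" "x \<noteq> y" "\<not> E x y"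
  shows "\<exists>v. (\<Sum>z\<in>V. v z) = 0 \<and> (\<exists>z\<in>V. mat_vec V (adj_matrix E) v z \<noteq> r * v z)"
proof -
  obtain a where a: "a \<in> V" "a \<noteq> x" "adj_matrix E x a + r \<noteq> 0"
  proof (cases "r = 0")
    case True
    obtain z where "z \<in> V" "E x z"
      using common_neighbour[OF assms] by blast
    then show ?thesis using True not_adj_self[of x] that[of z] by (auto simp: adj_matrix_def)
  next
    case False
    then show ?thesis using assms that[of y] by (auto simp: adj_matrix_def)
  qed
  define v where "v z = (if z = x then 1 else 0) - (if z = a then 1 else 0 :: real)" for z
  have "(\<Sum>z\<in>V. v z) = 0"
    unfolding v_def using finite_vertices a assms by (simp add: sum_subtractf)
  moreover have "mat_vec V (adj_matrix E) v x
      = (\<Sum>z\<in>V. (if z = x then adj_matrix E x z else 0) - (if z = a then adj_matrix E x z else 0))"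
    unfolding mat_vec_def v_def by (intro sum.cong) auto
  moreover have "\<dots> = - adj_matrix E x a"
    using finite_vertices a assms not_adj_self[of x] by (simp add: sum_subtractf adj_matrix_def)
  ultimately show ?thesis using a assms by (intro exI[of _ v]) (auto simp: v_def)
qed

lemma smaller_root_eigenvector:
  assumes "mu \<ge> 1" "x \<in> V" "y \<in> V" "x \<noteq> y" "\<not> E x y"
    and root: "s * s = (real lam - real mu) * s + (real k - real mu)"
  shows "\<exists>f. inner_on V f f = 1 \<and> (\<Sum>z\<in>V. f z) = 0
    \<and> inner_on V f (mat_vec V (adj_matrix E) f) = s"
proof -
  let ?A = "mat_vec V (adj_matrix E)" and ?r = "real lam - real mu - s"
  obtain v z where v: "(\<Sum>w\<in>V. v w) = 0" and z: "z \<in> V" "?A v z \<noteq> ?r * v z"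
    using adj_not_scalar_on_sum_zero[OF assms(1-5)] by blast
  define g where "g = (\<lambda>w. ?A v w - ?r * v w)"
  have "(\<Sum>w\<in>V. g w) = 0"
    unfolding g_def using v
    by (simp add: sum_subtractf sum_mat_vec_regular[OF simple degree] flip: sum_distrib_left)
  moreover have "?A g w = s * g w" if "w \<in> V" for w
    unfolding g_def by (rule mat_vec_eigenvector_from_square[OF mat_vec_adj_square[OF v that] root])
  ultimately show ?thesis
    using z by (intro normalized_eigenvector[OF finite_vertices z(1)]) (auto simp: g_def)
qed

end

theorem theorem1p1:
  fixes V :: "'a set" and E :: "'a \<Rightarrow> 'a \<Rightarrow> bool" and n k lam mu :: nat
  assumes "strongly_regular V E n k lam mu"
    and "mu \<ge> 1"
    and "\<exists>x\<in>V. \<exists>y\<in>V. x \<noteq> y \<and> \<not> E x y"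
  shows "QEC V E = -2 - (real lam - real mu
            - sqrt ((real lam - real mu)\<^sup>2 + 4 * (real k - real mu))) / 2"
proof -
  interpret strongly_regular_graph V E n k lam mu
    using assms(1) by unfold_locales
  obtain x y where xy: "x \<in> V" "y \<in> V" "x \<noteq> y" "\<not> E x y"
    using assms(3) by blast
  define d c where "d = real lam - real mu" and "c = real k - real mu"
  define s where "s = (d - sqrt (d\<^sup>2 + 4 * c)) / 2"
  have "0 \<le> d\<^sup>2 + 4 * c"
    using mu_le_k[OF xy] unfolding c_def by simp
  then have root: "s * s = d * s + c" and smaller: "2 * s \<le> d"
    unfolding s_def by (simp_all add: field_simps power2_eq_square)
  have form: "(\<Sum>x\<in>V. \<Sum>y\<in>V. real (graph_dist V E x y) * f x * f y)
      = -2 * inner_on V f f - inner_on V f (mat_vec V (adj_matrix E) f)"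
    if "(\<Sum>x\<in>V. f x) = 0" for f
    using distance_form_diameter_two[OF simple common_neighbour[OF assms(2)] that] .
  obtain g where g: "inner_on V g g = 1" "(\<Sum>x\<in>V. g x) = 0"
    "inner_on V g (mat_vec V (adj_matrix E) g) = s"
    using smaller_root_eigenvector[OF assms(2) xy] root unfolding d_def c_def by blast
  have "QEC V E = -2 - s"
  proof (rule QEC_eqI[OF _ g(1,2)])
    fix f
    assume unit: "inner_on V f f = 1" and sum0: "(\<Sum>x\<in>V. f x) = 0"
    then show "(\<Sum>x\<in>V. \<Sum>y\<in>V. real (graph_dist V E x y) * f x * f y) \<le> -2 - s"
      using adj_quadratic_form_ge_smaller_root[OF sum0] root smaller form[OF sum0]
      unfolding d_def c_def by simp
  qed (simp add: form g)
  then show ?thesis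
    unfolding s_def d_def c_def .
qed

end
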